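(* Let $\mathcal{A}$ be a unital C*-algebra and let $\mathcal{E}$ be a (left) Hilbert C*-module over $\mathcal{A}$. Let $\{\tau_n\}_{n=1}^\infty$ and $\{\omega_m\}_{m=1}^\infty$ be two modular Parseval frames for $\mathcal{E}$. Then for every $x \in \mathcal{E}$ with $x \neq 0$, \[ \left(\frac{\|\theta_\tau x\|_0+\|\theta_\omega x\|_0}{2}\right)^2\geq \|\theta_\tau x \|_0\, \|\theta_\omega x \|_0 \geq \frac{1}{\sup_{n, m \in \mathbb{N}} \|\langle \tau_n, \omega_m\rangle \|^2}. \]
   Context: A (left) Hilbert C*-module over a unital C*-algebra $\mathcal{A}$ is a left $\mathcal{A}$-module $\mathcal{E}$ with a map $\langle\cdot,\cdot\rangle:\mathcal{E}\times\mathcal{E}\to\mathcal{A}$ such that: $\langle x,x\rangle\ge 0$ for all $x$, and $\langle x,x\rangle=0$ implies $x=0$; $\langle x+y,z\rangle=\langle x,z\rangle+\langle y,z\rangle$; $\langle ax,y\rangle=a\langle x,y\rangle$ for $a\in\mathcal{A}$; $\langle x,y\rangle=\langle y,x\rangle^*$; and $\mathcal{E}$ is complete for the norm $\|x\|=\sqrt{\|\langle x,x\rangle\|}$. A collection $\{\tau_n\}_{n=1}^\infty\subseteq\mathcal{E}$ is a modular Parseval frame for $\mathcal{E}$ if $\langle x,x\rangle=\sum_{n=1}^\infty\langle x,\tau_n\rangle\langle\tau_n,x\rangle$ (convergent in $\mathcal{A}$) for all $x\in\mathcal{E}$. Let $\ell^2(\mathbb{N},\mathcal{A})$ be the set of sequences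 $\{a_n\}_{n=1}^\infty$ in $\mathcal{A}$ such that $\sum_n a_na_n^*$ converges in $\mathcal{A}$. For a modular Parseval frame $\{\tau_n\}$, the analysis operator is $\theta_\tau:\mathcal{E}\to\ell^2(\mathbb{N},\mathcal{A})$, $\theta_\tau x=\{\langle x,\tau_n\rangle\}_{n=1}^\infty$. For a sequence $\{a_n\}$ in $\mathcal{A}$, $\|\{a_n\}\|_0$ denotes the number of indices $n$ with $a_n\neq 0$ (the cardinality of its support, a value in $\{0,1,2,\dots\}\cup\{\infty\}$). In the right-hand side, $\|\langle \tau_n,\omega_m\rangle\|$ is the C*-algebra norm in $\mathcal{A}$. *)

theory Defs
  imports "HOL-Analysis.Analysis"
begin

text \<open>Unital (complex) C*-algebra. The carrier is a type 'a that is a real Banach algebra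
with unit of norm 1; the complex scalar multiplication smul and the involution star are
explicit parameters.\<close>

definition cstar_algebra :: "(complex \<Rightarrow> 'a::{real_normed_algebra_1,banach} \<Rightarrow> 'a) \<Rightarrow> ('a \<Rightarrow> 'a) \<Rightarrow> bool"
  where "cstar_algebra smul star \<longleftrightarrow>
    (\<forall>r a. smul (complex_of_real r) a = r *\<^sub>R a) \<and>
    (\<forall>c d a. smul (c + d) a = smul c a + smul d a) \<and>
    (\<forall>c a b. smul c (a + b) = smul c a + smul c b) \<and>
    (\<forall>c d a. smul (c * d) a = smul c (smul d a)) \<and>
    (\<forall>c a b. smul c (a * b) = smul c a * b) \<and>
    (\<forall>c a b. smul c (a * b) = a * smul c b) \<and>
    (\<forall>c a. norm (smul c a) = cmod c * norm a) \<and>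
    (\<forall>a. star (star a) = a) \<and>
    (\<forall>a b. star (a + b) = star a + star b) \<and>
    (\<forall>a b. star (a * b) = star b * star a) \<and>
    (\<forall>c a. star (smul c a) = smul (cnj c) (star a)) \<and>
    (\<forall>a. norm (star a * a) = (norm a)\<^sup>2)"

definition spectrum :: "(complex \<Rightarrow> 'a \<Rightarrow> 'a) \<Rightarrow> 'a::ring_1 \<Rightarrow> complex set"
  where "spectrum smul a =
    {z. \<not> (\<exists>b. b * (a - smul z 1) = 1 \<and> (a - smul z 1) * b = 1)}"

definition positive :: "(complex \<Rightarrow> 'a \<Rightarrow> 'a) \<Rightarrow> ('a \<Rightarrow> 'a) \<Rightarrow> 'a::ring_1 \<Rightarrow> bool"
  where "positive smul star a \<longleftrightarrow>
    star a = a \<and> spectrum smul a \<subseteq> complex_of_real ` {0..}"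

definition hm_norm :: "('e \<Rightarrow> 'e \<Rightarrow> 'a::real_normed_vector) \<Rightarrow> 'e \<Rightarrow> real"
  where "hm_norm ip x = sqrt (norm (ip x x))"

definition hilbert_cstar_module ::
  "(complex \<Rightarrow> 'a::{real_normed_algebra_1,banach} \<Rightarrow> 'a) \<Rightarrow> ('a \<Rightarrow> 'a) \<Rightarrow> ('a \<Rightarrow> 'e::ab_group_add \<Rightarrow> 'e) \<Rightarrow> ('e \<Rightarrow> 'e \<Rightarrow> 'a) \<Rightarrow> bool"
  where "hilbert_cstar_module smul star act ip \<longleftrightarrow>
    cstar_algebra smul star \<and>
    (\<forall>a b x. act (a + b) x = act a x + act b x) \<and>
    (\<forall>a x y. act a (x + y) = act a x + act a y) \<and>
    (\<forall>a b x. act (a * b) x = act a (act b x)) \<and>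
    (\<forall>x. act 1 x = x) \<and>
    (\<forall>x. positive smul star (ip x x)) \<and>
    (\<forall>x. ip x x = 0 \<longrightarrow> x = 0) \<and>
    (\<forall>x y z. ip (x + y) z = ip x z + ip y z) \<and>
    (\<forall>a x y. ip (act a x) y = a * ip x y) \<and>
    (\<forall>x y. ip x y = star (ip y x)) \<and>
    (\<forall>X. (\<forall>e>0. \<exists>N. \<forall>m\<ge>N. \<forall>n\<ge>N. hm_norm ip (X m - X n) < e) \<longrightarrow>
         (\<exists>l. (\<lambda>n. hm_norm ip (X n - l)) \<longlonglongrightarrow> 0))"

text \<open>Modular Parseval frame (indexed by nat, starting at 0).\<close>
definition modular_parseval_frame :: "('e \<Rightarrow> 'e \<Rightarrow> 'a::real_normed_algebra) \<Rightarrow> (nat \<Rightarrow> 'e) \<Rightarrow> bool"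
  where "modular_parseval_frame ip \<tau> \<longleftrightarrow>
    (\<forall>x. (\<lambda>n. ip x (\<tau> n) * ip (\<tau> n) x) sums ip x x)"

definition analysis_op :: "('e \<Rightarrow> 'e \<Rightarrow> 'a) \<Rightarrow> (nat \<Rightarrow> 'e) \<Rightarrow> 'e \<Rightarrow> nat \<Rightarrow> 'a"
  where "analysis_op ip \<tau> x = (\<lambda>n. ip x (\<tau> n))"

definition supp_card :: "(nat \<Rightarrow> 'a::zero) \<Rightarrow> ereal"
  where "supp_card f = (if finite {n. f n \<noteq> 0} then ereal (real (card {n. f n \<noteq> 0})) else \<infinity>)"

end

theory Submission
  imports Defs
begin

text \<open>
  Let \<open>S\<close> and \<open>T\<close> be the supports of \<open>\<theta>\<^sub>\<tau> x\<close> and \<open>\<theta>\<^sub>\<omega> x\<close>, and let \<open>M\<close> be the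
  supremum of \<open>\<parallel>\<langle>\<tau>\<^sub>n, \<omega>\<^sub>m\<rangle>\<parallel>\<^sup>2\<close>. If both supports are finite, the Parseval
  expansion \<open>\<langle>x, \<omega>\<^sub>m\<rangle> = \<Sum>\<^sub>n\<^sub>\<in>\<^sub>S \<langle>x, \<tau>\<^sub>n\<rangle>\<langle>\<tau>\<^sub>n, \<omega>\<^sub>m\<rangle>\<close> gives
  \<open>\<parallel>\<langle>x, \<omega>\<^sub>m\<rangle>\<parallel> \<le> \<surd>M \<Sum>\<^sub>n\<^sub>\<in>\<^sub>S \<parallel>\<langle>x, \<tau>\<^sub>n\<rangle>\<parallel>\<close>, and symmetrically with the roles of
  the frames exchanged; combining the two estimates yields \<open>1 \<le> |S| |T| M\<close>. The other
  inequality is AM-GM.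

  The work lies in justifying this from the bare axioms. \<open>M\<close> is finite because the vectors
  of a Parseval frame are norm-bounded, by a gliding-hump argument that uses completeness. The
  expansion of \<open>\<langle>x, y\<rangle>\<close> follows from the frame identity by polarization. The Cauchy-Schwarz
  inequality of the module follows from positivity of \<open>\<langle>z, z\<rangle>\<close> once a self-adjoint element
  \<open>h\<close> is known to have a spectral value of modulus \<open>\<parallel>h\<parallel>\<close>; this is derived from the
  C*-identity \<open>\<parallel>h\<^bsup>2\<^sup>j\<^esup>\<parallel> = \<parallel>h\<parallel>\<^bsup>2\<^sup>j\<^esup>\<close> and Neumann series alone.
\<close>


section \<open>Invertible elements of a Banach algebra\<close>

definition is_invertible :: "'a::ring_1 \<Rightarrow> bool" where
  "is_invertible u \<longleftrightarrow> (\<exists>v. v * u = 1 \<and> u * v = 1)"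

definition ring_inv :: "'a::ring_1 \<Rightarrow> 'a" where
  "ring_inv u = (SOME v. v * u = 1 \<and> u * v = 1)"

lemma ring_inv_cancel:
  assumes "is_invertible u"
  shows "ring_inv u * u = 1" "u * ring_inv u = 1"
proof -
  from assms obtain v where "v * u = 1 \<and> u * v = 1" unfolding is_invertible_def by blast
  then have "ring_inv u * u = 1 \<and> u * ring_inv u = 1" unfolding ring_inv_def by (rule someI)
  then show "ring_inv u * u = 1" "u * ring_inv u = 1" by auto
qed

lemma ring_inv_eqI:
  assumes "v * u = 1" "u * v = 1"
  shows "ring_inv u = v"
proof -
  have "is_invertible u" using assms unfolding is_invertible_def by blast
  then have "ring_inv u = (v * u) * ring_inv u" using assms by simp
  also have "\<dots> = v" using ring_inv_cancel[OF \<open>is_invertible u\<close>] by (simp add: mult.assoc)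
  finally show ?thesis .
qed

lemma is_invertible_mult:
  assumes "is_invertible a" "is_invertible b"
  shows "is_invertible (a * b)" "ring_inv (a * b) = ring_inv b * ring_inv a"
proof -
  have "(ring_inv b * ring_inv a) * (a * b) = ring_inv b * ((ring_inv a * a) * b)"
    and "(a * b) * (ring_inv b * ring_inv a) = a * ((b * ring_inv b) * ring_inv a)"
    by (simp_all only: mult.assoc)
  then have l: "(ring_inv b * ring_inv a) * (a * b) = 1" and r: "(a * b) * (ring_inv b * ring_inv a) = 1"
    by (simp_all add: ring_inv_cancel assms)
  show "is_invertible (a * b)" using l r unfolding is_invertible_def by blast
  show "ring_inv (a * b) = ring_inv b * ring_inv a" using ring_inv_eqI[OF l r] .
qed

lemma neumann_series:
  fixes d :: "'a::{real_normed_algebra_1,banach}"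
  assumes "norm d < 1"
  shows "is_invertible (1 - d)" "norm (ring_inv (1 - d) - 1) \<le> norm d / (1 - norm d)"
proof -
  have sg: "summable (\<lambda>k. norm d ^ k)" using assms by (simp add: summable_geometric)
  have sm: "summable (\<lambda>k. d ^ k)"
    by (rule summable_comparison_test[OF _ sg]) (auto simp: norm_power_ineq)
  define v where "v = (\<Sum>k. d ^ k)"
  have tail: "(\<Sum>k. d ^ Suc k) = v - 1" unfolding v_def using suminf_split_head[OF sm] by simp
  have "d * v = v - 1" using suminf_mult[OF sm, of d] tail unfolding v_def by simp
  then have r: "(1 - d) * v = 1" by (simp add: algebra_simps)
  have "v * d = v - 1" using suminf_mult2[OF sm, of d] tail unfolding v_def by (simp add: power_commutes)
  then have l: "v * (1 - d) = 1" by (simp add: algebra_simps)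
  show "is_invertible (1 - d)" using l r unfolding is_invertible_def by blast
  have "norm (ring_inv (1 - d) - 1) = norm (\<Sum>k. d ^ Suc k)" using ring_inv_eqI[OF l r] tail by simp
  also have "\<dots> \<le> (\<Sum>k. norm d ^ Suc k)"
  proof (rule norm_suminf_le)
    show "summable (\<lambda>k. norm d ^ Suc k)" using sg summable_Suc_iff by blast
  qed (simp add: norm_power_ineq del: power_Suc)
  also have "\<dots> = norm d / (1 - norm d)"
    using suminf_mult[OF sg, of "norm d"] assms by (simp add: suminf_geometric divide_inverse)
  finally show "norm (ring_inv (1 - d) - 1) \<le> norm d / (1 - norm d)" .
qed

lemma ring_inv_perturbation:
  fixes u w :: "'a::{real_normed_algebra_1,banach}"
  assumes u: "is_invertible u" and small: "norm (w - u) * norm (ring_inv u) \<le> 1/2"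
  shows "is_invertible w" "norm (ring_inv w - ring_inv u) \<le> 2 * norm (ring_inv u) ^ 2 * norm (w - u)"
proof -
  define d where "d = ring_inv u * (u - w)"
  have nd: "norm d \<le> norm (ring_inv u) * norm (w - u)"
    unfolding d_def using norm_mult_ineq[of "ring_inv u" "u - w"] by (simp add: norm_minus_commute)
  then have nd2: "norm d \<le> 1/2" using small by (simp add: mult.commute)
  have w: "w = u * (1 - d)"
    unfolding d_def by (simp add: right_diff_distrib mult.assoc[symmetric] ring_inv_cancel[OF u])
  have i: "is_invertible (1 - d)" using nd2 by (intro neumann_series(1)) simp
  show "is_invertible w" unfolding w by (rule is_invertible_mult(1)[OF u i])
  have "ring_inv w = ring_inv (1 - d) * ring_inv u" unfolding w by (rule is_invertible_mult(2)[OF u i])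
  then have "ring_inv w - ring_inv u = (ring_inv (1 - d) - 1) * ring_inv u"
    by (simp add: algebra_simps)
  then have "norm (ring_inv w - ring_inv u) \<le> norm (ring_inv (1 - d) - 1) * norm (ring_inv u)"
    by (simp add: norm_mult_ineq)
  also have "\<dots> \<le> 2 * norm d * norm (ring_inv u)"
  proof (rule mult_right_mono)
    have "norm d / (1 - norm d) \<le> 2 * norm d"
      using nd2 by (simp add: divide_le_eq algebra_simps mult_left_le)
    then show "norm (ring_inv (1 - d) - 1) \<le> 2 * norm d"
      using neumann_series(2)[of d] nd2 by simp
  qed simp
  also have "\<dots> \<le> 2 * norm (ring_inv u) ^ 2 * norm (w - u)"
    using mult_right_mono[OF nd, of "2 * norm (ring_inv u)"] by (simp add: power2_eq_square mult_ac)
  finally show "norm (ring_inv w - ring_inv u) \<le> 2 * norm (ring_inv u) ^ 2 * norm (w - u)" .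
qed

lemma ring_inv_continuous:
  fixes u :: "'a::{real_normed_algebra_1,banach}"
  assumes u: "is_invertible u" and e: "e > 0"
  shows "\<exists>\<delta>>0. \<forall>w. norm (w - u) < \<delta> \<longrightarrow> is_invertible w \<and> norm (ring_inv w - ring_inv u) < e"
proof -
  define K where "K = norm (ring_inv u) + 1"
  have K: "K > 0" "norm (ring_inv u) \<le> K" unfolding K_def by (auto intro: add_nonneg_pos)
  define \<delta> where "\<delta> = min (1 / (2 * K)) (e / (2 * K^2 + 1))"
  have "\<delta> > 0" unfolding \<delta>_def using K e by (simp add: add_nonneg_pos)
  moreover have "is_invertible w \<and> norm (ring_inv w - ring_inv u) < e" if w: "norm (w - u) < \<delta>" for w
  proof
    have "norm (w - u) * norm (ring_inv u) \<le> 1 / (2 * K) * K"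
      using w K by (intro mult_mono) (auto simp: \<delta>_def)
    then have small: "norm (w - u) * norm (ring_inv u) \<le> 1/2" using K by simp
    then show "is_invertible w" by (rule ring_inv_perturbation(1)[OF u])
    have "norm (ring_inv u) ^ 2 \<le> K ^ 2" using K by (intro power_mono) auto
    then have "norm (ring_inv w - ring_inv u) \<le> 2 * K^2 * norm (w - u)"
      using ring_inv_perturbation(2)[OF u small] by (smt (verit) mult_right_mono norm_ge_zero)
    also have "\<dots> \<le> 2 * K^2 * (e / (2 * K^2 + 1))"
      using w by (intro mult_left_mono) (auto simp: \<delta>_def)
    also have "\<dots> < e"
      using e by (simp add: pos_divide_less_eq add_pos_nonneg algebra_simps)
    finally show "norm (ring_inv w - ring_inv u) < e" .
  qed
  ultimately show ?thesis by blast
qed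

lemma ring_inv_one_minus_square:
  fixes x :: "'a::real_normed_algebra_1"
  assumes m: "is_invertible (1 - x)" and p: "is_invertible (1 + x)"
  shows "is_invertible (1 - x ^ 2)"
    "ring_inv (1 - x ^ 2) = (1/2) *\<^sub>R (ring_inv (1 - x) + ring_inv (1 + x))"
proof -
  have f: "1 - x ^ 2 = (1 - x) * (1 + x)" "1 - x ^ 2 = (1 + x) * (1 - x)"
    by (simp_all add: algebra_simps power2_eq_square)
  show "is_invertible (1 - x ^ 2)" using is_invertible_mult(1)[OF m p] f by simp
  let ?s = "ring_inv (1 - x) + ring_inv (1 + x)"
  have "?s * (1 - x ^ 2) = ring_inv (1 - x) * (1 - x) * (1 + x) + ring_inv (1 + x) * (1 + x) * (1 - x)"
    using f by (simp add: distrib_right mult.assoc)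
  then have l: "?s * (1 - x ^ 2) = 2" by (simp add: ring_inv_cancel[OF m] ring_inv_cancel[OF p])
  have "(1 - x ^ 2) * ring_inv (1 - x) = 1 + x"
    by (simp only: f(2) mult.assoc ring_inv_cancel[OF m] mult_1_right)
  moreover have "(1 - x ^ 2) * ring_inv (1 + x) = 1 - x"
    by (simp only: f(1) mult.assoc ring_inv_cancel[OF p] mult_1_right)
  ultimately have r: "(1 - x ^ 2) * ?s = 2" by (simp add: distrib_left)
  have "(2::'a) = 2 *\<^sub>R 1" by (simp add: scaleR_2)
  then have two: "(1/2::real) *\<^sub>R (2::'a) = 1" by (simp only: scaleR_scaleR) simp
  show "ring_inv (1 - x ^ 2) = (1/2) *\<^sub>R ?s"
    by (rule ring_inv_eqI) (simp_all add: l r two)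
qed

lemma norm_ring_inv_diff_ge:
  fixes x :: "'a::real_normed_algebra_1"
  assumes x: "norm x = 1" and m: "is_invertible (1 - x)" and p: "is_invertible (1 + x)"
  shows "1/2 \<le> norm (ring_inv (1 - x) - ring_inv (1 + x))"
proof -
  let ?d = "ring_inv (1 - x) - ring_inv (1 + x)"
  have "(1 - x) * ?d * (1 + x) = (1 - x) * ring_inv (1 - x) * (1 + x) - (1 - x) * (ring_inv (1 + x) * (1 + x))"
    by (simp add: algebra_simps)
  then have eq: "2 *\<^sub>R x = (1 - x) * ?d * (1 + x)"
    by (simp add: ring_inv_cancel[OF m] ring_inv_cancel[OF p] scaleR_2)
  have "2 = norm ((1 - x) * ?d * (1 + x))" unfolding eq[symmetric] using x by simp
  also have "\<dots> \<le> norm (1 - x) * norm ?d * norm (1 + x)"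
    by (rule order_trans[OF norm_mult_ineq mult_right_mono[OF norm_mult_ineq norm_ge_zero]])
  also have "\<dots> \<le> 2 * norm ?d * 2"
    using x norm_triangle_ineq[of 1 x] norm_triangle_ineq4[of 1 x] by (intro mult_mono) auto
  finally show ?thesis by simp
qed

section \<open>C*-algebras\<close>

lemma cis_power_two_power: "cis (pi / 2 ^ j) ^ 2 ^ j = -1"
proof -
  have "cis (pi / 2 ^ j) ^ 2 ^ j = cis (real (2 ^ j) * (pi / 2 ^ j))" by (rule Complex.DeMoivre)
  also have "real (2 ^ j) * (pi / 2 ^ j) = pi" by simp
  finally show ?thesis by simp
qed

lemma LIMSEQ_cis_pi_div_two_power: "(\<lambda>j. cis (pi / 2 ^ j)) \<longlonglongrightarrow> 1"
proof -
  have "(\<lambda>j. cis (pi / 2 ^ j)) \<longlonglongrightarrow> cis 0"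
    by (intro tendsto_intros LIMSEQ_divide_realpow_zero) simp
  then show ?thesis by simp
qed

locale cstar =
  fixes smul :: "complex \<Rightarrow> 'a::{real_normed_algebra_1,banach} \<Rightarrow> 'a"
    and star :: "'a \<Rightarrow> 'a"
  assumes cstar_algebra: "cstar_algebra smul star"
begin

lemma smul_of_real: "smul (complex_of_real r) a = r *\<^sub>R a"
  using cstar_algebra unfolding cstar_algebra_def by fast

lemma smul_add_left: "smul (c + d) a = smul c a + smul d a"
  using cstar_algebra unfolding cstar_algebra_def by fast

lemma smul_add_right: "smul c (a + b) = smul c a + smul c b"
  using cstar_algebra unfolding cstar_algebra_def by fast

lemma smul_smul: "smul (c * d) a = smul c (smul d a)"
  using cstar_algebra unfolding cstar_algebra_def by fast

lemma smul_mult_left: "smul c (a * b) = smul c a * b"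
  using cstar_algebra unfolding cstar_algebra_def by fast

lemma smul_mult_right: "smul c (a * b) = a * smul c b"
  using cstar_algebra unfolding cstar_algebra_def by fast

lemma norm_smul: "norm (smul c a) = cmod c * norm a"
  using cstar_algebra unfolding cstar_algebra_def by fast

lemma star_star [simp]: "star (star a) = a"
  using cstar_algebra unfolding cstar_algebra_def by fast

lemma star_add: "star (a + b) = star a + star b"
  using cstar_algebra unfolding cstar_algebra_def by fast

lemma star_mult: "star (a * b) = star b * star a"
  using cstar_algebra unfolding cstar_algebra_def by fast

lemma star_smul: "star (smul c a) = smul (cnj c) (star a)"
  using cstar_algebra unfolding cstar_algebra_def by fast

lemma cstar_identity: "norm (star a * a) = (norm a)\<^sup>2"
  using cstar_algebra unfolding cstar_algebra_def by fast

definition of_complex :: "complex \<Rightarrow> 'a" where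
  "of_complex c = smul c 1"

lemma smul_eq_of_complex_mult: "smul c a = of_complex c * a"
  unfolding of_complex_def using smul_mult_left[of c 1 a] by simp

lemma of_complex_commute: "of_complex c * a = a * of_complex c"
  unfolding of_complex_def using smul_mult_left[of c 1 a] smul_mult_right[of c a 1] by simp

lemma of_complex_of_real: "of_complex (complex_of_real r) = of_real r"
  unfolding of_complex_def smul_of_real by (simp add: of_real_def)

lemma of_complex_0 [simp]: "of_complex 0 = 0"
  using of_complex_of_real[of 0] by simp

lemma of_complex_1 [simp]: "of_complex 1 = 1"
  using of_complex_of_real[of 1] by simp

lemma of_complex_add: "of_complex (c + d) = of_complex c + of_complex d"
  unfolding of_complex_def by (rule smul_add_left)

lemma of_complex_mult: "of_complex (c * d) = of_complex c * of_complex d"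
proof -
  have "of_complex (c * d) = smul c (of_complex d)" unfolding of_complex_def by (rule smul_smul)
  then show ?thesis by (simp only: smul_eq_of_complex_mult)
qed

lemma of_complex_minus: "of_complex (- c) = - of_complex c"
  using of_complex_add[of c "- c"] by (simp add: eq_neg_iff_add_eq_0 add.commute)

lemma of_complex_diff: "of_complex (c - d) = of_complex c - of_complex d"
  using of_complex_add[of c "- d"] of_complex_minus[of d] by simp

lemma norm_of_complex_mult: "norm (of_complex c * a) = cmod c * norm a"
  using norm_smul[of c a] by (simp add: smul_eq_of_complex_mult)

lemma power_of_complex_mult: "(of_complex c * a) ^ n = of_complex (c ^ n) * a ^ n"
proof (induction n)
  case (Suc n)
  have "(of_complex c * a) ^ Suc n = (of_complex c * of_complex (c ^ n)) * (a * a ^ n)"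
    using Suc by (simp add: mult.assoc) (metis mult.assoc of_complex_commute)
  then show ?case by (simp add: of_complex_mult)
qed simp

lemma star_0 [simp]: "star 0 = 0"
  using star_add[of 0 0] by simp

lemma star_minus: "star (- a) = - star a"
  using star_add[of a "- a"] by (simp add: eq_neg_iff_add_eq_0 add.commute)

lemma star_diff: "star (a - b) = star a - star b"
  using star_add[of a "- b"] star_minus[of b] by simp

lemma star_1 [simp]: "star 1 = 1"
  using star_mult[of "star 1" 1] by simp

lemma star_of_complex: "star (of_complex c) = of_complex (cnj c)"
  unfolding of_complex_def star_smul by simp

lemma star_of_real [simp]: "star (of_real r) = of_real r"
  using star_of_complex[of "complex_of_real r"] by (simp add: of_complex_of_real)

lemma star_scaleR: "star (r *\<^sub>R a) = r *\<^sub>R star a"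
  using star_smul[of "complex_of_real r" a] by (simp add: smul_of_real)

lemma star_power: "star (a ^ n) = star a ^ n"
  by (induction n) (simp_all add: star_mult power_commutes)

lemma norm_star [simp]: "norm (star a) = norm a"
proof -
  have le: "norm b \<le> norm (star b)" for b
  proof (cases "b = 0")
    case False
    have "(norm b)\<^sup>2 \<le> norm (star b) * norm b"
      using cstar_identity[of b] norm_mult_ineq[of "star b" b] by simp
    then show ?thesis using False by (simp add: power2_eq_square)
  qed simp
  show ?thesis using le[of a] le[of "star a"] by simp
qed

lemma cstar_identity': "norm (a * star a) = (norm a)\<^sup>2"
  using cstar_identity[of "star a"] by simp

lemma norm_power_two_power_selfadjoint:
  assumes "star h = h"
  shows "norm (h ^ 2 ^ j) = norm h ^ 2 ^ j"
proof (induction j)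
  case (Suc j)
  have "h ^ 2 ^ Suc j = star (h ^ 2 ^ j) * h ^ 2 ^ j"
    using assms by (simp add: star_power power_mult[symmetric] power_add mult_2)
  then show ?case using Suc cstar_identity by (simp add: power_mult[symmetric] mult.commute)
qed simp

lemma smul_1 [simp]: "smul 1 a = a"
  using smul_of_real[of 1 a] by simp

lemma smul_minus_left: "smul (- c) a = - smul c a"
  by (simp add: smul_eq_of_complex_mult of_complex_minus)

lemma smul_minus_right: "smul c (- a) = - smul c a"
  by (simp add: smul_eq_of_complex_mult)

lemma smul_diff_right: "smul c (a - b) = smul c a - smul c b"
  by (simp add: smul_eq_of_complex_mult right_diff_distrib)

lemma polarization_smul:
  assumes F: "\<And>c. F c = A + smul (cnj c) B + smul c C + smul (c * cnj c) D"
  shows "F 1 + smul (-1) (F (-1)) + smul \<i> (F \<i>) + smul (-\<i>) (F (-\<i>)) = 4 *\<^sub>R B"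
proof -
  have "F 1 + smul (-1) (F (-1)) + smul \<i> (F \<i>) + smul (-\<i>) (F (-\<i>)) = B + B + B + B"
    by (simp add: F smul_add_right smul_diff_right smul_minus_left smul_minus_right algebra_simps
        flip: smul_smul)
  also have "\<dots> = (2 + 2) *\<^sub>R B" by (simp only: scaleR_add_left scaleR_2 add.assoc)
  also have "\<dots> = 4 *\<^sub>R B" by simp
  finally show ?thesis .
qed

lemma is_invertible_of_complex_mult_iff:
  assumes "c \<noteq> 0"
  shows "is_invertible (of_complex c * b) \<longleftrightarrow> is_invertible b"
proof -
  have inv: "is_invertible (of_complex c)" if "c \<noteq> 0" for c
    using that unfolding is_invertible_def
    by (intro exI[of _ "of_complex (1 / c)"]) (simp flip: of_complex_mult)
  have "b = of_complex (1 / c) * (of_complex c * b)"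
    using assms by (simp add: mult.assoc[symmetric] flip: of_complex_mult)
  then show ?thesis
    using is_invertible_mult(1) inv assms by (metis divide_eq_0_iff one_neq_zero)
qed

lemma spectrum_iff_not_invertible: "z \<in> spectrum smul a \<longleftrightarrow> \<not> is_invertible (a - of_complex z)"
  unfolding spectrum_def is_invertible_def of_complex_def by blast

lemma spectrum_norm_le:
  assumes "z \<in> spectrum smul a"
  shows "cmod z \<le> norm a"
proof (rule ccontr)
  assume "\<not> cmod z \<le> norm a"
  then have lt: "norm a < cmod z" and z: "z \<noteq> 0" by auto
  have "norm (of_complex (1 / z) * a) < 1"
    using lt z by (simp add: norm_of_complex_mult norm_divide)
  then have "is_invertible (1 - of_complex (1 / z) * a)" by (rule neumann_series(1))
  moreover have "of_complex (- z) * (1 - of_complex (1 / z) * a) = a - of_complex z"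
    using z by (simp add: right_diff_distrib mult.assoc[symmetric] of_complex_minus flip: of_complex_mult)
  ultimately have "is_invertible (a - of_complex z)"
    using is_invertible_of_complex_mult_iff[of "- z"] z by (metis neg_equal_0_iff_equal)
  then show False using assms spectrum_iff_not_invertible by blast
qed

lemma spectrum_add_of_complex: "z \<in> spectrum smul (a + of_complex w) \<longleftrightarrow> z - w \<in> spectrum smul a"
  unfolding spectrum_iff_not_invertible by (simp add: of_complex_diff algebra_simps)

lemma spectrum_of_complex_mult:
  assumes "c \<noteq> 0"
  shows "z \<in> spectrum smul (of_complex c * a) \<longleftrightarrow> z / c \<in> spectrum smul a"
proof -
  have "of_complex c * a - of_complex z = of_complex c * (a - of_complex (z / c))"
    using assms by (simp add: right_diff_distrib flip: of_complex_mult)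
  then show ?thesis unfolding spectrum_iff_not_invertible using is_invertible_of_complex_mult_iff[OF assms] by simp
qed

lemma spectrum_of_real_diff:
  "z \<in> spectrum smul (of_real t - k) \<longleftrightarrow> complex_of_real t - z \<in> spectrum smul k"
proof -
  have "of_real t - k = of_complex (-1) * k + of_complex (complex_of_real t)"
    by (simp add: of_complex_minus of_complex_of_real)
  then have "z \<in> spectrum smul (of_real t - k) \<longleftrightarrow> (z - complex_of_real t) / (-1) \<in> spectrum smul k"
    using spectrum_add_of_complex spectrum_of_complex_mult[of "-1"] by simp
  then show ?thesis by (simp add: minus_diff_eq)
qed

lemma spectrum_scaleR:
  assumes "r \<noteq> 0" "z \<in> spectrum smul k"
  shows "complex_of_real r * z \<in> spectrum smul (r *\<^sub>R k)"
  using spectrum_of_complex_mult[where c = "complex_of_real r" and a = k and z = "complex_of_real r * z"] assms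
  by (simp add: of_complex_of_real scaleR_conv_of_real)

lemma spectrum_selfadjoint_real:
  assumes sa: "star h = h" and z: "z \<in> spectrum smul h"
  shows "Im z = 0"
proof (rule ccontr)
  assume nz: "Im z \<noteq> 0"
  define s where "s = ((norm h)\<^sup>2 + 1) / (2 * Im z)"
  have s: "2 * Im z * s = (norm h)\<^sup>2 + 1" unfolding s_def using nz by simp
  define k where "k = h + of_complex (\<i> * complex_of_real s)"
  have zk: "z + \<i> * complex_of_real s \<in> spectrum smul k"
    unfolding k_def spectrum_add_of_complex using z by simp
  have "star k * k = (h - of_complex (\<i> * s)) * (h + of_complex (\<i> * s))"
    unfolding k_def by (simp add: star_add sa star_of_complex of_complex_minus)
  also have "\<dots> = h * h - of_complex (\<i> * s) * of_complex (\<i> * s)"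
    by (simp add: algebra_simps of_complex_commute[of _ h])
  also have "of_complex (\<i> * s) * of_complex (\<i> * s) = - of_real (s\<^sup>2)"
    by (simp add: power2_eq_square algebra_simps of_complex_minus
        flip: of_complex_mult of_complex_of_real)
  finally have "star k * k = h * h + of_real (s\<^sup>2)" by simp
  then have "(norm k)\<^sup>2 \<le> (norm h)\<^sup>2 + s\<^sup>2"
    using cstar_identity[of k] norm_triangle_ineq[of "h * h" "of_real (s\<^sup>2) :: 'a"] norm_mult_ineq[of h h]
    by (simp add: power2_eq_square del: of_real_mult)
  moreover have "(cmod (z + \<i> * complex_of_real s))\<^sup>2 \<le> (norm k)\<^sup>2"
    using spectrum_norm_le[OF zk] by (simp add: power_mono)
  moreover have "(cmod (z + \<i> * complex_of_real s))\<^sup>2 = (Re z)\<^sup>2 + (Im z + s)\<^sup>2"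
    by (simp add: cmod_power2)
  ultimately have "(Re z)\<^sup>2 + (Im z)\<^sup>2 + 2 * Im z * s \<le> (norm h)\<^sup>2"
    by (simp add: power2_eq_square algebra_simps)
  then show False using s by (smt (verit) zero_le_power2)
qed

lemma power_of_complex_rotate_mult:
  "(of_complex (w * cis (pi / 2 ^ j)) * h) ^ 2 ^ j = - ((of_complex w * h) ^ 2 ^ j)"
  using cis_power_two_power[of j] by (simp add: power_of_complex_mult power_mult_distrib of_complex_minus)

lemma resolvent_invertible_off_spectrum_circle:
  assumes none: "\<forall>\<mu>\<in>spectrum smul h. cmod \<mu> \<noteq> norm h" and w: "cmod w * norm h = 1"
  shows "is_invertible (1 - of_complex w * h)"
proof -
  have w0: "w \<noteq> 0" using w by auto
  have "cmod (1 / w) = norm h" using w w0 by (simp add: norm_divide field_simps)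
  then have "is_invertible (h - of_complex (1 / w))" using none spectrum_iff_not_invertible by blast
  moreover have "of_complex (- w) * (h - of_complex (1 / w)) = 1 - of_complex w * h"
    using w0 by (simp add: right_diff_distrib of_complex_minus flip: of_complex_mult)
  ultimately show ?thesis
    using is_invertible_of_complex_mult_iff[of "- w"] w0 by (metis neg_equal_0_iff_equal)
qed

text \<open>If no spectral value of \<open>h\<close> has modulus \<open>\<parallel>h\<parallel>\<close>, then \<open>w \<mapsto> (1 - w h)\<^sup>-\<^sup>1\<close> is
  uniformly continuous on the circle \<open>|w| = 1 / \<parallel>h\<parallel>\<close>. Since
  \<open>(1 - x\<^sup>2)\<^sup>-\<^sup>1 = ((1 - x)\<^sup>-\<^sup>1 + (1 + x)\<^sup>-\<^sup>1) / 2\<close>, and \<open>1 + x\<close> arises from \<open>1 - x\<close> by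
  rotating \<open>w\<close> through a \<open>2\<^sup>j\<close>-th root of \<open>-1\<close>, every \<open>w \<mapsto> (1 - (w h)\<^bsup>2\<^sup>j\<^esup>)\<^sup>-\<^sup>1\<close>
  inherits the same modulus of continuity. For large \<open>j\<close> the rotation is small while
  \<open>\<parallel>(w h)\<^bsup>2\<^sup>j\<^esup>\<parallel> = 1\<close>, whereas \<open>\<parallel>(1 - x)\<^sup>-\<^sup>1 - (1 + x)\<^sup>-\<^sup>1\<parallel> \<ge> 1/2\<close> whenever \<open>\<parallel>x\<parallel> = 1\<close>.\<close>

lemma resolvent_uniform_modulus_on_circle:
  assumes inv: "\<And>w. cmod w = t \<Longrightarrow> is_invertible (1 - of_complex w * h)" and e: "e > 0"
  shows "\<exists>\<delta>>0. \<forall>w w'. cmod w = t \<longrightarrow> cmod w' = t \<longrightarrow> dist w' w < \<delta> \<longrightarrow>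
           norm (ring_inv (1 - of_complex w' * h) - ring_inv (1 - of_complex w * h)) < e"
proof -
  define f where "f w = ring_inv (1 - of_complex w * h)" for w
  have "continuous_on (sphere 0 t) f"
    unfolding continuous_on_iff
  proof (intro ballI allI impI)
    fix w :: complex and \<epsilon> :: real assume w: "w \<in> sphere 0 t" and \<epsilon>: "\<epsilon> > 0"
    obtain \<delta> where \<delta>: "\<delta> > 0" and close: "\<And>u. norm (u - (1 - of_complex w * h)) < \<delta> \<Longrightarrow>
        norm (ring_inv u - ring_inv (1 - of_complex w * h)) < \<epsilon>"
      using ring_inv_continuous[OF inv \<epsilon>, of w] w by auto
    show "\<exists>d>0. \<forall>w'\<in>sphere 0 t. dist w' w < d \<longrightarrow> dist (f w') (f w) < \<epsilon>"
    proof (intro exI[of _ "\<delta> / (norm h + 1)"] conjI ballI impI)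
      show "\<delta> / (norm h + 1) > 0" using \<delta> by (simp add: add_nonneg_pos)
      fix w' assume "dist w' w < \<delta> / (norm h + 1)"
      then have "cmod (w - w') * (norm h + 1) < \<delta>"
        by (simp add: dist_norm norm_minus_commute pos_less_divide_eq add_nonneg_pos)
      moreover have "cmod (w - w') * norm h \<le> cmod (w - w') * (norm h + 1)"
        by (simp add: mult_left_mono)
      ultimately have "cmod (w - w') * norm h < \<delta>" by linarith
      moreover have "(1 - of_complex w' * h) - (1 - of_complex w * h) = of_complex (w - w') * h"
        by (simp add: of_complex_diff algebra_simps)
      ultimately show "dist (f w') (f w) < \<epsilon>"
        using close unfolding f_def dist_norm by (simp add: norm_of_complex_mult)
    qed
  qed
  then have "uniformly_continuous_on (sphere 0 t) f"
    by (rule compact_uniformly_continuous) simp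
  then obtain \<delta> where "\<delta> > 0"
    and "\<forall>w\<in>sphere 0 t. \<forall>w'\<in>sphere 0 t. dist w' w < \<delta> \<longrightarrow> dist (f w') (f w) < e"
    using e unfolding uniformly_continuous_on_def by blast
  then show ?thesis by (auto simp: f_def dist_norm)
qed

lemma resolvent_two_power_uniform_modulus:
  assumes inv: "\<And>w. cmod w = t \<Longrightarrow> is_invertible (1 - of_complex w * h)"
    and modulus: "\<And>w w'. cmod w = t \<Longrightarrow> cmod w' = t \<Longrightarrow> dist w' w < \<delta> \<Longrightarrow>
           norm (ring_inv (1 - of_complex w' * h) - ring_inv (1 - of_complex w * h)) < e"
  shows "(\<forall>w. cmod w = t \<longrightarrow> is_invertible (1 - (of_complex w * h) ^ 2 ^ j)) \<and>
         (\<forall>w w'. cmod w = t \<longrightarrow> cmod w' = t \<longrightarrow> dist w' w < \<delta> \<longrightarrow>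
           norm (ring_inv (1 - (of_complex w' * h) ^ 2 ^ j) - ring_inv (1 - (of_complex w * h) ^ 2 ^ j)) < e)"
proof (induction j)
  case 0
  show ?case using inv modulus by simp
next
  case (Suc j)
  let ?z = "cis (pi / 2 ^ j)"
  let ?p = "\<lambda>w. (of_complex w * h) ^ 2 ^ j"
  note rot = power_of_complex_rotate_mult[where j = j and h = h]
  have circle: "cmod (w * ?z) = t" if "cmod w = t" for w using that by (simp add: norm_mult)
  have sq: "(of_complex w * h) ^ 2 ^ Suc j = (?p w)\<^sup>2" for w
    by (simp add: power_mult[symmetric] mult.commute)
  have IH_inv: "\<And>w. cmod w = t \<Longrightarrow> is_invertible (1 - ?p w)"
    and IH_mod: "\<And>w w'. cmod w = t \<Longrightarrow> cmod w' = t \<Longrightarrow> dist w' w < \<delta> \<Longrightarrow>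
           norm (ring_inv (1 - ?p w') - ring_inv (1 - ?p w)) < e"
    using Suc.IH by blast+
  have inv_p: "is_invertible (1 - ?p w)" "is_invertible (1 + ?p w)" if "cmod w = t" for w
    using IH_inv[OF that] IH_inv[OF circle[OF that]] by (simp_all add: rot)
  have avg: "ring_inv (1 - (of_complex w * h) ^ 2 ^ Suc j)
      = (1/2) *\<^sub>R (ring_inv (1 - ?p w) + ring_inv (1 - ?p (w * ?z)))" if "cmod w = t" for w
    using ring_inv_one_minus_square(2)[OF inv_p[OF that]] rot[of w] sq[of w] by simp
  show ?case
  proof (intro conjI allI impI)
    fix w assume "cmod w = t"
    then show "is_invertible (1 - (of_complex w * h) ^ 2 ^ Suc j)"
      using ring_inv_one_minus_square(1)[OF inv_p] sq by simp
  next
    fix w w' assume w: "cmod w = t" and w': "cmod w' = t" and close: "dist w' w < \<delta>"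
    have close_rot: "dist (w' * ?z) (w * ?z) < \<delta>"
      using close by (simp add: dist_norm norm_mult flip: left_diff_distrib)
    have "norm (ring_inv (1 - (of_complex w' * h) ^ 2 ^ Suc j) - ring_inv (1 - (of_complex w * h) ^ 2 ^ Suc j))
        = (1/2) * norm ((ring_inv (1 - ?p w') + ring_inv (1 - ?p (w' * ?z)))
                        - (ring_inv (1 - ?p w) + ring_inv (1 - ?p (w * ?z))))"
      unfolding avg[OF w] avg[OF w'] by (simp flip: scaleR_diff_right)
    also have "\<dots> \<le> (1/2) * (norm (ring_inv (1 - ?p w') - ring_inv (1 - ?p w))
                  + norm (ring_inv (1 - ?p (w' * ?z)) - ring_inv (1 - ?p (w * ?z))))"
      by (intro mult_left_mono norm_diff_triangle_ineq) simp
    also have "\<dots> < (1/2) * (e + e)"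
      using IH_mod[OF w w' close] IH_mod[OF circle[OF w] circle[OF w'] close_rot] by simp
    finally show "norm (ring_inv (1 - (of_complex w' * h) ^ 2 ^ Suc j)
        - ring_inv (1 - (of_complex w * h) ^ 2 ^ Suc j)) < e" by simp
  qed
qed

lemma spectrum_meets_norm_circle:
  assumes pow: "\<And>j. norm (h ^ 2 ^ j) = norm h ^ 2 ^ j"
  shows "\<exists>\<mu>\<in>spectrum smul h. cmod \<mu> = norm h"
proof (cases "h = 0")
  case True
  have "0 \<in> spectrum smul h" unfolding spectrum_iff_not_invertible is_invertible_def True by simp
  then show ?thesis using True by auto
next
  case False
  show ?thesis
  proof (rule ccontr)
    assume "\<not> ?thesis"
    then have none: "\<forall>\<mu>\<in>spectrum smul h. cmod \<mu> \<noteq> norm h" by blast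
    define t where "t = 1 / norm h"
    have t: "t > 0" "t * norm h = 1" unfolding t_def using False by simp_all
    have inv: "is_invertible (1 - of_complex w * h)" if "cmod w = t" for w
      using resolvent_invertible_off_spectrum_circle[OF none] that t(2) by simp
    obtain \<delta> where \<delta>: "\<delta> > 0" and modulus: "\<And>w w'. cmod w = t \<Longrightarrow> cmod w' = t \<Longrightarrow> dist w' w < \<delta> \<Longrightarrow>
           norm (ring_inv (1 - of_complex w' * h) - ring_inv (1 - of_complex w * h)) < 1/2"
      using resolvent_uniform_modulus_on_circle[where t = t and h = h and e = "1/2"] inv by auto
    obtain j where "\<forall>i\<ge>j. cmod (cis (pi / 2 ^ i) - 1) < \<delta> / t"
      using LIMSEQ_D[OF LIMSEQ_cis_pi_div_two_power, of "\<delta> / t"] \<delta> t by auto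
    then have j: "t * cmod (cis (pi / 2 ^ j) - 1) < \<delta>" using t by (simp add: pos_less_divide_eq mult.commute)
    have inv_j: "\<And>w. cmod w = t \<Longrightarrow> is_invertible (1 - (of_complex w * h) ^ 2 ^ j)"
      and mod_j: "\<And>w w'. cmod w = t \<Longrightarrow> cmod w' = t \<Longrightarrow> dist w' w < \<delta> \<Longrightarrow>
        norm (ring_inv (1 - (of_complex w' * h) ^ 2 ^ j) - ring_inv (1 - (of_complex w * h) ^ 2 ^ j)) < 1/2"
      using resolvent_two_power_uniform_modulus[where t = t and h = h and j = j, OF inv modulus]
      by blast+
    let ?w = "complex_of_real t" and ?w' = "complex_of_real t * cis (pi / 2 ^ j)"
    define x where "x = (of_complex ?w * h) ^ 2 ^ j"
    have "norm x = (t * norm h) ^ 2 ^ j"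
      unfolding x_def power_of_complex_mult norm_of_complex_mult
      using t(1) by (simp add: pow norm_power power_mult_distrib)
    then have x: "norm x = 1" by (simp only: t(2) power_one)
    have circle: "cmod ?w = t" "cmod ?w' = t" using t by (simp_all add: norm_mult)
    have "?w' - ?w = complex_of_real t * (cis (pi / 2 ^ j) - 1)" by (simp add: algebra_simps)
    then have close: "dist ?w' ?w < \<delta>" using t j by (simp add: dist_norm norm_mult)
    have "norm (ring_inv (1 + x) - ring_inv (1 - x)) < 1/2"
      using mod_j[OF circle close] unfolding power_of_complex_rotate_mult x_def[symmetric] by simp
    moreover have "is_invertible (1 - x)" "is_invertible (1 + x)"
      using inv_j[OF circle(1)] inv_j[OF circle(2)]
      unfolding power_of_complex_rotate_mult x_def[symmetric] by simp_all
    ultimately show False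
      using norm_ring_inv_diff_ge[OF x] by (simp add: norm_minus_commute)
  qed
qed

lemma selfadjoint_spectral_point:
  assumes sa: "star h = h"
  shows "\<exists>\<mu>\<in>spectrum smul h. Im \<mu> = 0 \<and> \<bar>Re \<mu>\<bar> = norm h"
proof -
  obtain \<mu> where \<mu>: "\<mu> \<in> spectrum smul h" "cmod \<mu> = norm h"
    using spectrum_meets_norm_circle[OF norm_power_two_power_selfadjoint[OF sa]] by blast
  moreover have "Im \<mu> = 0" using spectrum_selfadjoint_real[OF sa \<mu>(1)] .
  ultimately show ?thesis by (auto simp: cmod_def)
qed

abbreviation pos :: "'a \<Rightarrow> bool" where
  "pos \<equiv> positive smul star"

lemma positive_spectrum:
  assumes "pos k" "\<mu> \<in> spectrum smul k"
  shows "Im \<mu> = 0" "0 \<le> Re \<mu>"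
  using assms unfolding positive_def by auto

text \<open>For self-adjoint \<open>k\<close>, positivity is equivalent to the metric condition
  \<open>\<parallel>t - k\<parallel> \<le> t\<close> for \<open>t \<ge> \<parallel>k\<parallel>\<close>, which is visibly stable under sums.\<close>

lemma norm_of_real_diff_positive_le:
  assumes k: "pos k" and t: "norm k \<le> t"
  shows "norm (of_real t - k) \<le> t"
proof -
  have "star (of_real t - k) = of_real t - k" using k unfolding positive_def by (simp add: star_diff)
  then obtain \<mu> where \<mu>: "\<mu> \<in> spectrum smul (of_real t - k)" "Im \<mu> = 0" "\<bar>Re \<mu>\<bar> = norm (of_real t - k)"
    using selfadjoint_spectral_point by blast
  have "complex_of_real t - \<mu> \<in> spectrum smul k" using \<mu>(1) spectrum_of_real_diff by simp
  with positive_spectrum[OF k] spectrum_norm_le have "0 \<le> t - Re \<mu>" "t - Re \<mu> \<le> norm k"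
    by (fastforce simp: \<mu>(2) cmod_def)+
  then show ?thesis using \<mu>(3) t by linarith
qed

lemma positiveI:
  assumes sa: "star k = k" and t: "norm (of_real t - k) \<le> t"
  shows "pos k"
  unfolding positive_def
proof (intro conjI sa subsetI)
  fix \<mu> assume \<mu>: "\<mu> \<in> spectrum smul k"
  have "complex_of_real t - \<mu> \<in> spectrum smul (of_real t - k)"
    using spectrum_of_real_diff[of "complex_of_real t - \<mu>" t k] \<mu> by simp
  then have "cmod (complex_of_real t - \<mu>) \<le> t" using spectrum_norm_le t by fastforce
  moreover have "Im \<mu> = 0" using spectrum_selfadjoint_real[OF sa \<mu>] .
  ultimately have "0 \<le> Re \<mu>" by (simp add: cmod_def)
  then show "\<mu> \<in> complex_of_real ` {0..}"
    using \<open>Im \<mu> = 0\<close> by (intro image_eqI[of _ _ "Re \<mu>"]) (auto simp: complex_eq_iff)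
qed

lemma positive_add:
  assumes "pos a" "pos b"
  shows "pos (a + b)"
proof (rule positiveI)
  show "star (a + b) = a + b" using assms unfolding positive_def by (simp add: star_add)
  have "norm (of_real (norm a + norm b) - (a + b)) = norm ((of_real (norm a) - a) + (of_real (norm b) - b))"
    by (simp add: algebra_simps)
  also have "\<dots> \<le> norm a + norm b"
    using norm_triangle_ineq norm_of_real_diff_positive_le[OF assms(1) order_refl]
      norm_of_real_diff_positive_le[OF assms(2) order_refl] by (smt (verit))
  finally show "norm (of_real (norm a + norm b) - (a + b)) \<le> norm a + norm b" .
qed

lemma spectrum_le_norm_of_positive_diff:
  assumes U: "pos U" and Uh: "pos (U - h)" and \<mu>: "\<mu> \<in> spectrum smul h"
  shows "Re \<mu> \<le> norm U"
proof -
  have "star U = U" using U unfolding positive_def by simp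
  then have "pos (of_real (norm U) - U)" by (intro positiveI[of _ "norm U"]) (simp_all add: star_diff)
  then have "pos (of_real (norm U) - h)" using positive_add[OF _ Uh] by fastforce
  moreover have "complex_of_real (norm U) - \<mu> \<in> spectrum smul (of_real (norm U) - h)"
    using spectrum_of_real_diff[of "complex_of_real (norm U) - \<mu>" "norm U" h] \<mu> by simp
  ultimately show ?thesis using positive_spectrum(2) by fastforce
qed

end

section \<open>Hilbert C*-modules\<close>

lemma norm_add_or_diff_ge:
  fixes a b :: "'a::real_normed_vector"
  shows "norm b \<le> norm (a + b) \<or> norm b \<le> norm (a - b)"
proof -
  have "2 * norm b = norm ((a + b) - (a - b))" by (simp flip: scaleR_2)
  also have "\<dots> \<le> norm (a + b) + norm (a - b)" by (rule norm_triangle_ineq4)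
  finally show ?thesis by linarith
qed

locale hilbert_module =
  fixes smul :: "complex \<Rightarrow> 'a::{real_normed_algebra_1,banach} \<Rightarrow> 'a"
    and star :: "'a \<Rightarrow> 'a"
    and act :: "'a \<Rightarrow> 'e::ab_group_add \<Rightarrow> 'e"
    and ip :: "'e \<Rightarrow> 'e \<Rightarrow> 'a"
  assumes hilbert_module: "hilbert_cstar_module smul star act ip"

sublocale hilbert_module \<subseteq> cstar
  using hilbert_module unfolding hilbert_cstar_module_def by unfold_locales (elim conjE)

context hilbert_module
begin

lemma ip_positive: "pos (ip x x)"
  using hilbert_module unfolding hilbert_cstar_module_def by metis

lemma ip_self_eq_0: "ip x x = 0 \<Longrightarrow> x = 0"
  using hilbert_module unfolding hilbert_cstar_module_def by metis

lemma ip_add_left: "ip (x + y) z = ip x z + ip y z"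
  using hilbert_module unfolding hilbert_cstar_module_def by metis

lemma ip_act_left: "ip (act a x) y = a * ip x y"
  using hilbert_module unfolding hilbert_cstar_module_def by metis

lemma ip_conj: "ip x y = star (ip y x)"
  using hilbert_module unfolding hilbert_cstar_module_def by metis

lemma hm_cauchy_converges:
  "(\<forall>e>0. \<exists>N. \<forall>m\<ge>N. \<forall>n\<ge>N. hm_norm ip (X m - X n) < e) \<Longrightarrow> \<exists>l. (\<lambda>n. hm_norm ip (X n - l)) \<longlonglongrightarrow> 0"
  using hilbert_module unfolding hilbert_cstar_module_def
  by (elim conjE) (erule allE, erule impE, assumption, assumption)

lemma ip_add_right: "ip x (y + z) = ip x y + ip x z"
  by (metis ip_conj ip_add_left star_add)

lemma ip_act_right: "ip x (act a y) = ip x y * star a"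
  by (metis ip_conj ip_act_left star_mult star_star)

lemma ip_0_left [simp]: "ip 0 y = 0"
  using ip_add_left[of 0 0 y] by simp

lemma ip_0_right [simp]: "ip x 0 = 0"
  using ip_add_right[of x 0 0] by simp

lemma ip_minus_left: "ip (- x) y = - ip x y"
  using ip_add_left[of x "- x" y] by (simp add: eq_neg_iff_add_eq_0 add.commute)

lemma ip_minus_right: "ip x (- y) = - ip x y"
  using ip_add_right[of x y "- y"] by (simp add: eq_neg_iff_add_eq_0 add.commute)

lemma ip_diff_left: "ip (x - y) z = ip x z - ip y z"
  using ip_add_left[of x "- y" z] by (simp add: ip_minus_left)

lemma ip_diff_right: "ip x (y - z) = ip x y - ip x z"
  using ip_add_right[of x y "- z"] by (simp add: ip_minus_right)

lemma norm_ip_commute: "norm (ip x y) = norm (ip y x)"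
  using ip_conj[of x y] by simp

lemma norm_ip_act_le: "norm (ip (act b y) (act b y)) \<le> (norm b)\<^sup>2 * norm (ip y y)"
proof -
  have "norm (ip (act b y) (act b y)) = norm (b * ip y y * star b)"
    by (simp add: ip_act_left ip_act_right mult.assoc)
  also have "\<dots> \<le> norm b * norm (ip y y) * norm (star b)"
    by (rule order_trans[OF norm_mult_ineq mult_right_mono[OF norm_mult_ineq norm_ge_zero]])
  finally show ?thesis by (simp add: power2_eq_square mult_ac)
qed

text \<open>Positivity of \<open>\<langle>x - r \<langle>x, y\<rangle> y, x - r \<langle>x, y\<rangle> y\<rangle>\<close> bounds the spectrum of \<open>\<langle>x, y\<rangle>\<langle>y, x\<rangle>\<close>.\<close>

lemma spectrum_ip_mult_bound:
  assumes \<mu>: "\<mu> \<in> spectrum smul (ip x y * ip y x)"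
  shows "2 * r * Re \<mu> \<le> norm (ip x x) + r\<^sup>2 * (norm (ip x y))\<^sup>2 * norm (ip y y)"
proof (cases "r = 0")
  case False
  define h where "h = ip x y * ip y x"
  define b where "b = r *\<^sub>R ip x y"
  define U where "U = ip x x + ip (act b y) (act b y)"
  have "ip (x - act b y) (x - act b y) = U - (2 * r) *\<^sub>R h"
    unfolding U_def h_def b_def
    by (simp add: ip_diff_left ip_diff_right ip_act_left ip_act_right star_scaleR flip: ip_conj)
      (simp add: algebra_simps scaleR_2 flip: scaleR_scaleR)
  then have "pos (U - (2 * r) *\<^sub>R h)" using ip_positive by metis
  moreover have "pos U" unfolding U_def by (intro positive_add ip_positive)
  moreover have "complex_of_real (2 * r) * \<mu> \<in> spectrum smul ((2 * r) *\<^sub>R h)"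
    using False \<mu> unfolding h_def by (intro spectrum_scaleR) auto
  ultimately have "2 * r * Re \<mu> \<le> norm U"
    using spectrum_le_norm_of_positive_diff by fastforce
  also have "\<dots> \<le> norm (ip x x) + (norm b)\<^sup>2 * norm (ip y y)"
    unfolding U_def using norm_ip_act_le by (smt (verit) norm_triangle_ineq)
  finally show ?thesis by (simp add: b_def power_mult_distrib)
qed simp

lemma norm_ip_squared_le: "(norm (ip x y))\<^sup>2 \<le> norm (ip x x) * norm (ip y y)"
proof (cases "ip x y = 0")
  case False
  define A where "A = (norm (ip x y))\<^sup>2"
  define X where "X = norm (ip x x)"
  define Y where "Y = norm (ip y y)"
  have "y \<noteq> 0" using False by auto
  then have Y: "Y > 0" unfolding Y_def using ip_self_eq_0 by auto
  have "star (ip x y * ip y x) = ip x y * ip y x" by (simp add: star_mult flip: ip_conj)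
  moreover have "norm (ip x y * ip y x) = A"
    unfolding A_def using cstar_identity'[of "ip x y"] by (simp flip: ip_conj)
  ultimately obtain \<mu> where \<mu>: "\<mu> \<in> spectrum smul (ip x y * ip y x)" "\<bar>Re \<mu>\<bar> = A"
    using selfadjoint_spectral_point by auto
  have bound: "2 * (s / Y) * Re \<mu> \<le> X + (s / Y)\<^sup>2 * A * Y" for s
    using spectrum_ip_mult_bound[OF \<mu>(1)] unfolding A_def X_def Y_def by blast
  have "2 * Re \<mu> \<le> X * Y + A" "- 2 * Re \<mu> \<le> X * Y + A"
    using bound[of 1] bound[of "-1"] Y by (simp_all add: field_simps power2_eq_square)
  then have "2 * A \<le> X * Y + A" using \<mu>(2) by (auto simp: abs_if)
  then show ?thesis unfolding A_def X_def Y_def by simp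
qed simp

abbreviation mnorm :: "'e \<Rightarrow> real" where
  "mnorm \<equiv> hm_norm ip"

lemma mnorm_squared: "(mnorm x)\<^sup>2 = norm (ip x x)"
  unfolding hm_norm_def by simp

lemma mnorm_nonneg: "0 \<le> mnorm x"
  unfolding hm_norm_def by simp

lemma norm_ip_le: "norm (ip x y) \<le> mnorm x * mnorm y"
proof (rule power2_le_imp_le)
  show "(norm (ip x y))\<^sup>2 \<le> (mnorm x * mnorm y)\<^sup>2"
    unfolding power_mult_distrib mnorm_squared by (rule norm_ip_squared_le)
qed (simp add: mnorm_nonneg)

lemma mnorm_triangle: "mnorm (x + y) \<le> mnorm x + mnorm y"
proof (rule power2_le_imp_le)
  have "(mnorm (x + y))\<^sup>2 = norm ((ip x x + ip x y) + (ip y x + ip y y))"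
    by (simp add: mnorm_squared ip_add_left ip_add_right add_ac)
  also have "\<dots> \<le> norm (ip x x) + norm (ip x y) + (norm (ip y x) + norm (ip y y))"
    by (rule order_trans[OF norm_triangle_ineq add_mono[OF norm_triangle_ineq norm_triangle_ineq]])
  also have "\<dots> \<le> (mnorm x)\<^sup>2 + mnorm x * mnorm y + (mnorm y * mnorm x + (mnorm y)\<^sup>2)"
    using norm_ip_le[of x y] norm_ip_le[of y x] unfolding mnorm_squared by linarith
  also have "\<dots> = (mnorm x + mnorm y)\<^sup>2" by (simp add: power2_sum)
  finally show "(mnorm (x + y))\<^sup>2 \<le> (mnorm x + mnorm y)\<^sup>2" .
qed (simp add: mnorm_nonneg add_nonneg_nonneg)

lemma mnorm_minus: "mnorm (- x) = mnorm x"
  unfolding hm_norm_def by (simp add: ip_minus_left ip_minus_right)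

lemma mnorm_minus_commute: "mnorm (x - y) = mnorm (y - x)"
  using mnorm_minus[of "x - y"] by simp

lemma mnorm_triangle_diff: "mnorm (x - z) \<le> mnorm (x - y) + mnorm (y - z)"
  using mnorm_triangle[of "x - y" "y - z"] by simp

lemma ip_scale_left: "ip (act (r *\<^sub>R 1) x) y = r *\<^sub>R ip x y"
  by (simp add: ip_act_left)

lemma mnorm_scale: "mnorm (act (r *\<^sub>R 1) x) = \<bar>r\<bar> * mnorm x"
proof -
  have "ip (act (r *\<^sub>R 1) x) (act (r *\<^sub>R 1) x) = (r * r) *\<^sub>R ip x x"
    by (simp add: ip_act_left ip_act_right star_scaleR)
  then show ?thesis unfolding hm_norm_def by (simp add: real_sqrt_mult abs_mult)
qed

lemma mnorm_geometric_limit: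
  assumes step: "\<And>k. mnorm (X (Suc k) - X k) \<le> (1/3) ^ Suc k"
  shows "\<exists>l. \<forall>k. mnorm (X k - l) \<le> (1/3) ^ k / 2"
proof -
  have tail: "mnorm (X (k + d) - X k) \<le> ((1/3) ^ k - (1/3) ^ (k + d)) / 2" for k d
  proof (induction d)
    case (Suc d)
    have "mnorm (X (k + Suc d) - X k) \<le> mnorm (X (Suc (k + d)) - X (k + d)) + mnorm (X (k + d) - X k)"
      using mnorm_triangle_diff by simp
    also have "\<dots> \<le> ((1/3) ^ k - (1/3) ^ (k + Suc d)) / 2" using step[of "k + d"] Suc by simp
    finally show ?case .
  qed (simp add: hm_norm_def)
  have close: "mnorm (X m - X k) \<le> (1/3) ^ k / 2" if "k \<le> m" for k m
  proof -
    have "mnorm (X m - X k) \<le> ((1/3) ^ k - (1/3) ^ m) / 2" using tail[of k "m - k"] that by simp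
    also have "\<dots> \<le> (1/3) ^ k / 2" by (simp add: divide_right_mono)
    finally show ?thesis .
  qed
  have "\<forall>e>0. \<exists>N. \<forall>m\<ge>N. \<forall>n\<ge>N. mnorm (X m - X n) < e"
  proof (intro allI impI)
    fix e :: real assume "e > 0"
    then obtain N where N: "(1/3 :: real) ^ N < e" using real_arch_pow_inv[of e "1/3"] by auto
    have "mnorm (X m - X n) < e" if "m \<ge> N" "n \<ge> N" for m n
      using mnorm_triangle_diff[of "X m" "X n" "X N"] mnorm_minus_commute[of "X N" "X n"]
        close[OF that(1)] close[OF that(2)] N by linarith
    then show "\<exists>N. \<forall>m\<ge>N. \<forall>n\<ge>N. mnorm (X m - X n) < e" by blast
  qed
  then obtain l where l: "(\<lambda>n. mnorm (X n - l)) \<longlonglongrightarrow> 0" using hm_cauchy_converges by blast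
  have "mnorm (X k - l) \<le> (1/3) ^ k / 2 + 0" for k
  proof (rule LIMSEQ_le_const)
    show "(\<lambda>m. (1/3) ^ k / 2 + mnorm (X m - l)) \<longlonglongrightarrow> (1/3) ^ k / 2 + 0"
      by (intro tendsto_add tendsto_const l)
    have "mnorm (X k - l) \<le> (1/3) ^ k / 2 + mnorm (X m - l)" if "m \<ge> k" for m
      using mnorm_triangle_diff[of "X k" l "X m"] mnorm_minus_commute[of "X k" "X m"] close[OF that]
      by linarith
    then show "\<exists>N. \<forall>m\<ge>N. mnorm (X k - l) \<le> (1/3) ^ k / 2 + mnorm (X m - l)" by blast
  qed
  then show ?thesis by auto
qed

lemma sign_choice_sequence:
  "\<exists>X. \<forall>k. (X (Suc k) - X k = \<xi> k \<or> X (Suc k) - X k = - \<xi> k) \<and>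
          norm (ip (\<xi> k) (T k)) \<le> norm (ip (X (Suc k)) (T k))"
proof -
  define X where "X = rec_nat 0 (\<lambda>k y. if norm (ip (\<xi> k) (T k)) \<le> norm (ip (y + \<xi> k) (T k))
                                         then y + \<xi> k else y - \<xi> k)"
  have "norm (ip (\<xi> k) (T k)) \<le> norm (ip (X k + \<xi> k) (T k)) \<or>
        norm (ip (\<xi> k) (T k)) \<le> norm (ip (X k - \<xi> k) (T k))" for k
    using norm_add_or_diff_ge[where a = "ip (X k) (T k)" and b = "ip (\<xi> k) (T k)"]
    by (simp add: ip_add_left ip_diff_left)
  then show ?thesis by (intro exI[of _ X]) (auto simp: X_def)
qed

end

section \<open>Modular Parseval frames\<close>

lemma card_product_lower_bound:
  fixes \<alpha> \<beta> :: "'i \<Rightarrow> real"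
  assumes "finite S" "finite T" "0 < sum \<alpha> S" "0 \<le> c"
    and \<alpha>: "\<And>n. n \<in> S \<Longrightarrow> \<alpha> n \<le> c * sum \<beta> T"
    and \<beta>: "\<And>m. m \<in> T \<Longrightarrow> \<beta> m \<le> c * sum \<alpha> S"
  shows "1 \<le> real (card S) * real (card T) * c\<^sup>2"
proof -
  have "sum \<alpha> S \<le> real (card S) * (c * sum \<beta> T)" using \<alpha> by (rule sum_bounded_above)
  also have "\<dots> \<le> real (card S) * (c * (real (card T) * (c * sum \<alpha> S)))"
    using sum_bounded_above[of T \<beta>, OF \<beta>] assms(4) by (intro mult_left_mono) auto
  finally have "1 * sum \<alpha> S \<le> (real (card S) * real (card T) * c\<^sup>2) * sum \<alpha> S"
    by (simp add: power2_eq_square mult_ac)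
  then show ?thesis using assms(3) by (simp only: mult_le_cancel_right)
qed

lemma ereal_mult_le_mean_squared:
  fixes a b :: ereal
  assumes "0 \<le> a" "0 \<le> b"
  shows "a * b \<le> ((a + b) / 2) ^ 2"
proof (cases a; cases b)
  fix r q assume [simp]: "a = ereal r" "b = ereal q"
  have "r * q \<le> ((r + q) / 2)\<^sup>2"
    using zero_le_power2[of "r - q"] by (simp add: power2_eq_square field_simps)
  then show ?thesis by (simp add: power2_eq_square)
qed (use assms in \<open>simp_all add: power2_eq_square\<close>)

lemma supp_card_ge_1:
  assumes "\<exists>n. f n \<noteq> 0"
  shows "1 \<le> supp_card f"
  using assms by (auto simp: supp_card_def Suc_le_eq card_gt_0_iff)

context hilbert_module
begin

lemma frame_coefficients_bounded:
  assumes "modular_parseval_frame ip \<tau>"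
  shows "\<exists>B. \<forall>n. norm (ip x (\<tau> n)) \<le> B"
proof -
  have "(\<lambda>n. ip x (\<tau> n) * ip (\<tau> n) x) \<longlonglongrightarrow> 0"
    using assms unfolding modular_parseval_frame_def by (blast intro: summable_LIMSEQ_zero sums_summable)
  moreover have "norm (ip x (\<tau> n) * ip (\<tau> n) x) = (norm (ip x (\<tau> n)))\<^sup>2" for n
    using cstar_identity'[of "ip x (\<tau> n)"] by (simp flip: ip_conj)
  ultimately have "(\<lambda>n. (norm (ip x (\<tau> n)))\<^sup>2) \<longlonglongrightarrow> 0"
    using tendsto_norm_zero by fastforce
  then obtain K where K: "\<And>n. norm ((norm (ip x (\<tau> n)))\<^sup>2) \<le> K"
    using convergent_imp_Bseq[OF convergentI] BseqE by metis
  have "norm (ip x (\<tau> n)) \<le> 1 + K" for n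
  proof -
    have "2 * norm (ip x (\<tau> n)) \<le> (norm (ip x (\<tau> n)))\<^sup>2 + 1"
      using zero_le_power2[of "norm (ip x (\<tau> n)) - 1"] by (simp add: power2_diff)
    moreover have "(norm (ip x (\<tau> n)))\<^sup>2 \<le> K" using K[of n] by simp
    ultimately show ?thesis using zero_le_power2[of "norm (ip x (\<tau> n))"] by linarith
  qed
  then show ?thesis by blast
qed

text \<open>Gliding hump: were the frame unbounded, a suitable choice of signs in
  \<open>x = \<Sum>\<^sub>k \<plusminus>\<xi>\<^sub>k\<close>, with \<open>\<xi>\<^sub>k\<close> a small multiple of an ever larger frame vector, would make the
  coefficients \<open>\<langle>x, \<tau>\<^sub>n\<rangle>\<close> unbounded.\<close>

lemma frame_elements_bounded:
  assumes frame: "modular_parseval_frame ip \<tau>"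
  shows "\<exists>C. \<forall>n. mnorm (\<tau> n) \<le> C"
proof (rule ccontr)
  assume "\<nexists>C. \<forall>n. mnorm (\<tau> n) \<le> C"
  then have "\<forall>k. \<exists>n. 2 * (real k + 1) * 3 ^ Suc k < mnorm (\<tau> n)" by (meson not_le)
  then obtain \<nu> where \<nu>: "\<And>k. 2 * (real k + 1) * 3 ^ Suc k < mnorm (\<tau> (\<nu> k))"
    using choice[of "\<lambda>k n. 2 * (real k + 1) * 3 ^ Suc k < mnorm (\<tau> n)"] by blast
  define T where "T k = \<tau> (\<nu> k)" for k
  define t where "t k = mnorm (T k)" for k
  have t_big: "2 * (real k + 1) < (1/3) ^ Suc k * t k" for k
  proof -
    have "2 * (real k + 1) = (1/3) ^ Suc k * (2 * (real k + 1) * 3 ^ Suc k)"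
      by (simp add: power_one_over)
    also have "\<dots> < (1/3) ^ Suc k * t k"
      using \<nu>[of k] unfolding t_def T_def by (intro mult_strict_left_mono) auto
    finally show ?thesis .
  qed
  have t_pos: "t k > 0" for k
  proof -
    have "0 < (1/3::real) ^ Suc k * t k" by (rule less_trans[OF _ t_big]) simp
    then show ?thesis by (simp add: zero_less_mult_iff)
  qed
  define \<xi> where "\<xi> k = act (((1/3) ^ Suc k / t k) *\<^sub>R 1) (T k)" for k
  have \<xi>_norm: "mnorm (\<xi> k) = (1/3) ^ Suc k" for k
    unfolding \<xi>_def mnorm_scale using t_pos[of k] by (simp add: t_def)
  have \<xi>_ip: "norm (ip (\<xi> k) (T k)) = (1/3) ^ Suc k * t k" for k
    unfolding \<xi>_def ip_scale_left using t_pos[of k]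
    by (simp add: t_def power2_eq_square flip: mnorm_squared)
  obtain X where X_step: "\<And>k. X (Suc k) - X k = \<xi> k \<or> X (Suc k) - X k = - \<xi> k"
    and X_large: "\<And>k. norm (ip (\<xi> k) (T k)) \<le> norm (ip (X (Suc k)) (T k))"
    using sign_choice_sequence by blast
  have "mnorm (X (Suc k) - X k) \<le> (1/3) ^ Suc k" for k
    using X_step[of k] \<xi>_norm[of k] mnorm_minus[of "\<xi> k"] by auto
  then obtain l where l: "\<And>k. mnorm (X k - l) \<le> (1/3) ^ k / 2"
    using mnorm_geometric_limit by blast
  obtain B where B: "\<And>n. norm (ip l (\<tau> n)) \<le> B"
    using frame_coefficients_bounded[OF frame] by blast
  obtain k :: nat where k: "B < real k" using reals_Archimedean2 by blast
  have "(1/3) ^ Suc k * t k \<le> norm (ip l (T k) + ip (X (Suc k) - l) (T k))"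
    using X_large[of k] \<xi>_ip[of k] by (simp flip: ip_add_left)
  also have "\<dots> \<le> B + mnorm (X (Suc k) - l) * t k"
    unfolding T_def t_def by (rule order_trans[OF norm_triangle_ineq add_mono[OF B norm_ip_le]])
  also have "\<dots> \<le> B + (1/3) ^ Suc k * t k / 2"
    using l[of "Suc k"] t_pos[of k] by (simp add: mult_right_mono)
  finally have "(1/3) ^ Suc k * t k \<le> 2 * B" by linarith
  then show False using t_big[of k] k by simp
qed

lemma cross_frame_coefficients_bounded:
  assumes "modular_parseval_frame ip \<tau>" "modular_parseval_frame ip \<omega>"
  shows "bdd_above (range (\<lambda>p. (norm (ip (\<tau> (fst p)) (\<omega> (snd p))))\<^sup>2))"
proof -
  obtain C D where C: "\<And>n. mnorm (\<tau> n) \<le> C" and D: "\<And>m. mnorm (\<omega> m) \<le> D"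
    using frame_elements_bounded assms by metis
  have "norm (ip (\<tau> n) (\<omega> m)) \<le> C * D" for n m
    by (rule order_trans[OF norm_ip_le mult_mono[OF C D order_trans[OF mnorm_nonneg C] mnorm_nonneg]])
  then have "(norm (ip (\<tau> n) (\<omega> m)))\<^sup>2 \<le> (C * D)\<^sup>2" for n m
    by (simp add: power_mono)
  then show ?thesis by (intro bdd_aboveI) auto
qed

lemma ip_polarization_terms:
  fixes x y u :: 'e and c :: complex
  defines "z \<equiv> x + act (of_complex c) y"
  shows "ip z u * ip u z = ip x u * ip u x + smul (cnj c) (ip x u * ip u y)
                          + smul c (ip y u * ip u x) + smul (c * cnj c) (ip y u * ip u y)"
    and "ip z z = ip x x + smul (cnj c) (ip x y) + smul c (ip y x) + smul (c * cnj c) (ip y y)"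
proof -
  have left: "ip z v = ip x v + smul c (ip y v)" for v
    unfolding z_def by (simp add: ip_add_left ip_act_left smul_eq_of_complex_mult)
  have right: "ip v z = ip v x + smul (cnj c) (ip v y)" for v
    unfolding z_def
    by (simp add: ip_add_right ip_act_right star_of_complex smul_eq_of_complex_mult of_complex_commute)
  show "ip z u * ip u z = ip x u * ip u x + smul (cnj c) (ip x u * ip u y)
                          + smul c (ip y u * ip u x) + smul (c * cnj c) (ip y u * ip u y)"
    unfolding left right
    by (simp add: distrib_left distrib_right smul_add_right ac_simps
        flip: smul_smul smul_mult_left smul_mult_right)
  show "ip z z = ip x x + smul (cnj c) (ip x y) + smul c (ip y x) + smul (c * cnj c) (ip y y)"
    unfolding left right by (simp add: smul_add_right ac_simps flip: smul_smul)
qed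

lemma parseval_frame_sums:
  assumes frame: "modular_parseval_frame ip \<tau>"
  shows "(\<lambda>n. ip x (\<tau> n) * ip (\<tau> n) y) sums ip x y"
proof -
  define z where "z c = x + act (of_complex c) y" for c
  define F where "F c n = ip (z c) (\<tau> n) * ip (\<tau> n) (z c)" for c n
  have "(\<lambda>n. F c n) sums ip (z c) (z c)" for c
    using frame unfolding modular_parseval_frame_def F_def by blast
  then have "(\<lambda>n. F 1 n + smul (-1) (F (-1) n) + smul \<i> (F \<i> n) + smul (-\<i>) (F (-\<i>) n))
      sums (ip (z 1) (z 1) + smul (-1) (ip (z (-1)) (z (-1))) + smul \<i> (ip (z \<i>) (z \<i>))
            + smul (-\<i>) (ip (z (-\<i>)) (z (-\<i>))))"
    by (intro sums_add) (simp_all only: smul_eq_of_complex_mult sums_mult)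
  then have "(\<lambda>n. 4 *\<^sub>R (ip x (\<tau> n) * ip (\<tau> n) y)) sums (4 *\<^sub>R ip x y)"
    unfolding F_def z_def
    by (simp only: polarization_smul[OF ip_polarization_terms(1)]
                   polarization_smul[OF ip_polarization_terms(2)])
  then show ?thesis using sums_scaleR_right[of _ _ "1/4"] by fastforce
qed

lemma parseval_frame_finite_expansion:
  assumes "modular_parseval_frame ip \<tau>" "finite S" "\<And>n. n \<notin> S \<Longrightarrow> ip x (\<tau> n) = 0"
  shows "ip x y = (\<Sum>n\<in>S. ip x (\<tau> n) * ip (\<tau> n) y)"
proof -
  have "(\<lambda>n. ip x (\<tau> n) * ip (\<tau> n) y) sums (\<Sum>n\<in>S. ip x (\<tau> n) * ip (\<tau> n) y)"
    using assms(2,3) by (intro sums_finite) simp_all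
  then show ?thesis using parseval_frame_sums[OF assms(1)] sums_unique2 by blast
qed

lemma norm_ip_le_frame_sum:
  assumes "modular_parseval_frame ip \<tau>" "finite S" "\<And>n. n \<notin> S \<Longrightarrow> ip x (\<tau> n) = 0"
    and "\<And>n. n \<in> S \<Longrightarrow> norm (ip (\<tau> n) y) \<le> c"
  shows "norm (ip x y) \<le> c * (\<Sum>n\<in>S. norm (ip x (\<tau> n)))"
proof -
  have "norm (ip x y) = norm (\<Sum>n\<in>S. ip x (\<tau> n) * ip (\<tau> n) y)"
    using parseval_frame_finite_expansion[OF assms(1-3), of y] by simp
  also have "\<dots> \<le> (\<Sum>n\<in>S. norm (ip x (\<tau> n)) * norm (ip (\<tau> n) y))"
    by (rule order_trans[OF norm_sum sum_mono[OF norm_mult_ineq]])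
  also have "\<dots> \<le> (\<Sum>n\<in>S. norm (ip x (\<tau> n)) * c)"
    using assms(4) by (intro sum_mono mult_left_mono) auto
  finally show ?thesis by (simp add: sum_distrib_left mult.commute)
qed

lemma frame_support_nonempty:
  assumes "modular_parseval_frame ip \<tau>" "x \<noteq> 0"
  shows "\<exists>n. ip x (\<tau> n) \<noteq> 0"
proof (rule ccontr)
  assume "\<nexists>n. ip x (\<tau> n) \<noteq> 0"
  then have "(\<lambda>n. ip x (\<tau> n) * ip (\<tau> n) x) sums 0" by simp
  then have "ip x x = 0" using assms(1) sums_unique2 unfolding modular_parseval_frame_def by blast
  then show False using assms(2) ip_self_eq_0 by blast
qed

lemma card_supports_product_bound:
  assumes \<tau>: "modular_parseval_frame ip \<tau>" and \<omega>: "modular_parseval_frame ip \<omega>" and x: "x \<noteq> 0"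
    and S: "finite S" "S = {n. ip x (\<tau> n) \<noteq> 0}" and T: "finite T" "T = {m. ip x (\<omega> m) \<noteq> 0}"
    and gram: "\<And>n m. (norm (ip (\<tau> n) (\<omega> m)))\<^sup>2 \<le> M"
  shows "1 \<le> real (card S) * real (card T) * M"
proof -
  have M: "0 \<le> M" by (rule order_trans[OF zero_le_power2 gram])
  have gram': "norm (ip (\<tau> n) (\<omega> m)) \<le> sqrt M" for n m
    using gram by (simp add: real_le_rsqrt)
  obtain n0 where "ip x (\<tau> n0) \<noteq> 0" using frame_support_nonempty[OF \<tau> x] by blast
  then have "0 < (\<Sum>n\<in>S. norm (ip x (\<tau> n)))"
    using S by (intro sum_pos2[where i = n0]) auto
  moreover have "norm (ip x (\<tau> n)) \<le> sqrt M * (\<Sum>m\<in>T. norm (ip x (\<omega> m)))" for n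
    using T gram' by (intro norm_ip_le_frame_sum[OF \<omega>]) (auto simp: norm_ip_commute)
  moreover have "norm (ip x (\<omega> m)) \<le> sqrt M * (\<Sum>n\<in>S. norm (ip x (\<tau> n)))" for m
    using S gram' by (intro norm_ip_le_frame_sum[OF \<tau>]) auto
  ultimately show ?thesis
    using S T M card_product_lower_bound[of S T "\<lambda>n. norm (ip x (\<tau> n))" "sqrt M"
        "\<lambda>m. norm (ip x (\<omega> m))"] by auto
qed

lemma support_product_lower_bound:
  assumes \<tau>: "modular_parseval_frame ip \<tau>" and \<omega>: "modular_parseval_frame ip \<omega>" and x: "x \<noteq> 0"
  shows "ereal (1 / (SUP p \<in> UNIV. (norm (ip (\<tau> (fst p)) (\<omega> (snd p))))\<^sup>2))
           \<le> supp_card (analysis_op ip \<tau> x) * supp_card (analysis_op ip \<omega> x)"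
proof -
  define M where "M = (SUP p \<in> UNIV. (norm (ip (\<tau> (fst p)) (\<omega> (snd p))))\<^sup>2)"
  define S where "S = {n. ip x (\<tau> n) \<noteq> 0}"
  define T where "T = {m. ip x (\<omega> m) \<noteq> 0}"
  have card: "supp_card (analysis_op ip \<tau> x) = (if finite S then ereal (card S) else \<infinity>)"
    "supp_card (analysis_op ip \<omega> x) = (if finite T then ereal (card T) else \<infinity>)"
    unfolding supp_card_def analysis_op_def S_def T_def by simp_all
  show ?thesis
  proof (cases "finite S \<and> finite T")
    case False
    have "1 \<le> supp_card (analysis_op ip \<tau> x)" "1 \<le> supp_card (analysis_op ip \<omega> x)"
      using frame_support_nonempty[OF \<tau> x] frame_support_nonempty[OF \<omega> x]
      by (simp_all add: supp_card_ge_1 analysis_op_def)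
    then have infinite: "supp_card (analysis_op ip \<tau> x) * supp_card (analysis_op ip \<omega> x) = \<infinity>"
      using False unfolding card by (auto split: if_splits)
    show ?thesis unfolding infinite by simp
  next
    case True
    have gram: "(norm (ip (\<tau> n) (\<omega> m)))\<^sup>2 \<le> M" for n m
      unfolding M_def using cross_frame_coefficients_bounded[OF \<tau> \<omega>]
      by (rule cSUP_upper2[where x = "(n, m)"]) simp_all
    have "1 \<le> real (card S) * real (card T) * M"
      using True by (intro card_supports_product_bound[OF \<tau> \<omega> x _ S_def _ T_def gram]) auto
    moreover have "0 \<le> M" by (rule order_trans[OF zero_le_power2 gram])
    ultimately have "1 / M \<le> real (card S) * real (card T)"
      by (cases "M = 0") (auto simp: pos_divide_le_eq)
    then show ?thesis using True unfolding card M_def by simp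
  qed
qed

end

theorem mainTheorem1:
  fixes smul :: "complex \<Rightarrow> 'a::{real_normed_algebra_1,banach} \<Rightarrow> 'a"
    and star :: "'a \<Rightarrow> 'a"
    and act :: "'a \<Rightarrow> 'e::ab_group_add \<Rightarrow> 'e"
    and ip :: "'e \<Rightarrow> 'e \<Rightarrow> 'a"
    and \<tau> \<omega> :: "nat \<Rightarrow> 'e"
    and x :: 'e
  assumes "hilbert_cstar_module smul star act ip"
    and "modular_parseval_frame ip \<tau>"
    and "modular_parseval_frame ip \<omega>"
    and "x \<noteq> 0"
  shows "((supp_card (analysis_op ip \<tau> x) + supp_card (analysis_op ip \<omega> x)) / 2) ^ 2
           \<ge> supp_card (analysis_op ip \<tau> x) * supp_card (analysis_op ip \<omega> x)
       \<and> supp_card (analysis_op ip \<tau> x) * supp_card (analysis_op ip \<omega> x)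
           \<ge> ereal (1 / (SUP p \<in> (UNIV :: (nat \<times> nat) set). (norm (ip (\<tau> (fst p)) (\<omega> (snd p))))\<^sup>2))"
proof
  interpret hilbert_module smul star act ip by unfold_locales (rule assms(1))
  show "supp_card (analysis_op ip \<tau> x) * supp_card (analysis_op ip \<omega> x)
          \<ge> ereal (1 / (SUP p \<in> UNIV. (norm (ip (\<tau> (fst p)) (\<omega> (snd p))))\<^sup>2))"
    using support_product_lower_bound[OF assms(2-4)] .
  show "((supp_card (analysis_op ip \<tau> x) + supp_card (analysis_op ip \<omega> x)) / 2) ^ 2
          \<ge> supp_card (analysis_op ip \<tau> x) * supp_card (analysis_op ip \<omega> x)"
    by (rule ereal_mult_le_mean_squared) (auto simp: supp_card_def)
qed

end
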